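(* Let $X$ be a complex Banach space with open unit ball $B$, let $H(B)$ be a uniform algebra with $A_u(B)\subseteq H(B)\subseteq H^\infty(B)$, let $x_0^{**}\in\bar B^{**}$ and $f\in H(B)$. If $\hat f$ is constant on $M^{\mathcal P}_{x_0^{**}}$, say $\hat f(M^{\mathcal P}_{x_0^{**}})=\{\lambda\}$, then every net $(x_\alpha)\subset B$ converging to $x_0^{**}$ in $w(X^{**},P(X))$ satisfies $\lim_\alpha f(x_\alpha)=\lambda$.
   Context: $H^\infty(B)$: bounded holomorphic functions on $B$ with sup norm; $A_u(B)$: uniformly continuous holomorphic functions on $B$ (uniform closure of the continuous polynomials $P(X)$ on $B$); a uniform algebra between them is a closed unital subalgebra of $H^\infty(B)$ containing $A_u(B)$. $M_{H(B)}$ is its spectrum, $\hat f$ the Gelfand transform. $\bar B^{**}$ is the closed unit ball of $X^{**}$; $\tilde P$ (resp. $\tilde g$) is the Aron–Berner extension of $P\in P(X)$ (resp. $g\in A_u(B)$, extended continuously to $\bar B^{**}$). $w(X^{**},P(X))$ is the weakest topology on $X^{**}$ making all $\tilde P$ continuous. The polynomial fiber is $M^{\mathcal P}_{x_0^{**}}=\{\tau\in M_{H(B)}:\tau(g)=\tilde g(x_0^{**})\ \forall g\in A_u(B)\}$. *)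

theory Defs
  imports "HOL-Analysis.Analysis"
begin

(* Isabelle/HOL has no class of complex vector spaces.  A complex Banach space X
   is modelled as a real Banach space 'a together with the operator J = "multiplication by i". *)

definition cscale :: "('a::real_vector \<Rightarrow> 'a) \<Rightarrow> complex \<Rightarrow> 'a \<Rightarrow> 'a" where
  "cscale J c x = Re c *\<^sub>R x + Im c *\<^sub>R J x"

definition complex_structure :: "('a::real_normed_vector \<Rightarrow> 'a) \<Rightarrow> bool" where
  "complex_structure J \<longleftrightarrow> linear J \<and> (\<forall>x. J (J x) = - x)
      \<and> (\<forall>c x. norm (cscale J c x) = cmod c * norm x)"

abbreviation B :: "'a::real_normed_vector set" where
  "B \<equiv> ball 0 1"

definition cdual :: "('a::real_normed_vector \<Rightarrow> 'a) \<Rightarrow> ('a \<Rightarrow> complex) set" where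
  "cdual J = {\<phi>. bounded_linear \<phi> \<and> (\<forall>x. \<phi> (J x) = \<i> * \<phi> x)}"

(* X^** : bounded complex-linear functionals on X^* (extended by 0 off X^* ) *)
definition bidual :: "('a::real_normed_vector \<Rightarrow> 'a) \<Rightarrow> (('a \<Rightarrow> complex) \<Rightarrow> complex) set" where
  "bidual J = {z.
      (\<forall>\<phi>\<in>cdual J. \<forall>\<psi>\<in>cdual J. z (\<lambda>x. \<phi> x + \<psi> x) = z \<phi> + z \<psi>)
    \<and> (\<forall>c. \<forall>\<phi>\<in>cdual J. z (\<lambda>x. c * \<phi> x) = c * z \<phi>)
    \<and> (\<exists>C. \<forall>\<phi>\<in>cdual J. cmod (z \<phi>) \<le> C * onorm \<phi>)
    \<and> (\<forall>\<phi>. \<phi> \<notin> cdual J \<longrightarrow> z \<phi> = 0)}"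

definition bidual_ball :: "('a::real_normed_vector \<Rightarrow> 'a) \<Rightarrow> (('a \<Rightarrow> complex) \<Rightarrow> complex) set" where
  "bidual_ball J = {z \<in> bidual J. \<forall>\<phi>\<in>cdual J. cmod (z \<phi>) \<le> onorm \<phi>}"

definition canon :: "('a::real_normed_vector \<Rightarrow> 'a) \<Rightarrow> 'a \<Rightarrow> (('a \<Rightarrow> complex) \<Rightarrow> complex)" where
  "canon J x = (\<lambda>\<phi>. if \<phi> \<in> cdual J then \<phi> x else 0)"

(* continuous complex m-linear forms; arguments indexed by {..<m} *)
definition cmultilinear :: "('a::real_normed_vector \<Rightarrow> 'a) \<Rightarrow> nat \<Rightarrow> ((nat \<Rightarrow> 'a) \<Rightarrow> complex) \<Rightarrow> bool" where
  "cmultilinear J m A \<longleftrightarrow>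
      (\<forall>xs ys. (\<forall>i<m. xs i = ys i) \<longrightarrow> A xs = A ys)
    \<and> (\<forall>k<m. \<forall>xs. (\<lambda>y. A (xs(k := y))) \<in> cdual J)
    \<and> (\<exists>C. \<forall>xs. cmod (A xs) \<le> C * (\<Prod>i<m. norm (xs i)))"

definition symmetric_form :: "nat \<Rightarrow> ((nat \<Rightarrow> 'a) \<Rightarrow> complex) \<Rightarrow> bool" where
  "symmetric_form m A \<longleftrightarrow> (\<forall>\<sigma> xs. \<sigma> permutes {..<m} \<longrightarrow> A (xs \<circ> \<sigma>) = A xs)"

definition poly_rep :: "('a::real_normed_vector \<Rightarrow> 'a) \<Rightarrow> ('a \<Rightarrow> complex) \<Rightarrow> nat
      \<Rightarrow> (nat \<Rightarrow> (nat \<Rightarrow> 'a) \<Rightarrow> complex) \<Rightarrow> bool" where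
  "poly_rep J P N A \<longleftrightarrow> (\<forall>m\<le>N. cmultilinear J m (A m) \<and> symmetric_form m (A m))
      \<and> (\<forall>x. P x = (\<Sum>m\<le>N. A m (\<lambda>_. x)))"

definition cpoly :: "('a::real_normed_vector \<Rightarrow> 'a) \<Rightarrow> ('a \<Rightarrow> complex) \<Rightarrow> bool" where
  "cpoly J P \<longleftrightarrow> (\<exists>N A. poly_rep J P N A)"

(* ABext m A j xs zs: the last j variables (positions m-j..m-1) are extended to X^**,
   taking the values zs i; the first m-j variables are xs i \<in> X.  The variable at
   position m-1 is extended first (innermost iterated weak-star limit). *)
fun ABext :: "nat \<Rightarrow> ((nat \<Rightarrow> 'a) \<Rightarrow> complex) \<Rightarrow> nat \<Rightarrow> (nat \<Rightarrow> 'a)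
      \<Rightarrow> (nat \<Rightarrow> (('a \<Rightarrow> complex) \<Rightarrow> complex)) \<Rightarrow> complex" where
  "ABext m A 0 xs zs = A xs"
| "ABext m A (Suc j) xs zs = zs (m - Suc j) (\<lambda>y. ABext m A j (xs(m - Suc j := y)) zs)"

(* Aron--Berner extension of a polynomial P \<in> P(X) (independent of the representation) *)
definition ABpoly :: "('a::real_normed_vector \<Rightarrow> 'a) \<Rightarrow> ('a \<Rightarrow> complex)
      \<Rightarrow> (('a \<Rightarrow> complex) \<Rightarrow> complex) \<Rightarrow> complex" where
  "ABpoly J P z = (SOME v. \<exists>N A. poly_rep J P N A
        \<and> v = (\<Sum>m\<le>N. ABext m (A m) m (\<lambda>_. 0) (\<lambda>_. z)))"

definition Au :: "('a::real_normed_vector \<Rightarrow> 'a) \<Rightarrow> ('a \<Rightarrow> complex) set" where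
  "Au J = {g. \<exists>P. (\<forall>n. cpoly J (P n)) \<and> uniform_limit B P g sequentially}"

definition Au_ext :: "('a::real_normed_vector \<Rightarrow> 'a) \<Rightarrow> ('a \<Rightarrow> complex)
      \<Rightarrow> (('a \<Rightarrow> complex) \<Rightarrow> complex) \<Rightarrow> complex" where
  "Au_ext J g z = lim (\<lambda>n. ABpoly J
      ((SOME P. (\<forall>n. cpoly J (P n)) \<and> uniform_limit B P g sequentially) n) z)"

definition holo_on_B :: "('a::real_normed_vector \<Rightarrow> 'a) \<Rightarrow> ('a \<Rightarrow> complex) \<Rightarrow> bool" where
  "holo_on_B J f \<longleftrightarrow> (\<forall>x\<in>B. \<exists>D. (f has_derivative D) (at x) \<and> (\<forall>h. D (J h) = \<i> * D h))"

definition Hinf :: "('a::real_normed_vector \<Rightarrow> 'a) \<Rightarrow> ('a \<Rightarrow> complex) set" where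
  "Hinf J = {f. holo_on_B J f \<and> bounded (f ` B)}"

definition uniform_algebra :: "('a::real_normed_vector \<Rightarrow> 'a) \<Rightarrow> ('a \<Rightarrow> complex) set \<Rightarrow> bool" where
  "uniform_algebra J H \<longleftrightarrow> Au J \<subseteq> H \<and> H \<subseteq> Hinf J
     \<and> (\<forall>f\<in>H. \<forall>g\<in>H. (\<lambda>x. f x + g x) \<in> H \<and> (\<lambda>x. f x * g x) \<in> H)
     \<and> (\<forall>c. \<forall>f\<in>H. (\<lambda>x. c * f x) \<in> H)
     \<and> (\<lambda>x. 1) \<in> H
     \<and> (\<forall>F f. (\<forall>n. F n \<in> H) \<and> uniform_limit B F f sequentially \<longrightarrow> f \<in> H)"

(* spectrum M_{H(B)}: nonzero multiplicative linear functionals on H(B); elements of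
   H(B) are functions on B, so \<tau> must only depend on the restriction to B *)
definition spectrum_alg :: "('a::real_normed_vector \<Rightarrow> complex) set
      \<Rightarrow> (('a \<Rightarrow> complex) \<Rightarrow> complex) set" where
  "spectrum_alg H = {\<tau>.
      (\<forall>f\<in>H. \<forall>g\<in>H. \<tau> (\<lambda>x. f x + g x) = \<tau> f + \<tau> g)
    \<and> (\<forall>c. \<forall>f\<in>H. \<tau> (\<lambda>x. c * f x) = c * \<tau> f)
    \<and> (\<forall>f\<in>H. \<forall>g\<in>H. \<tau> (\<lambda>x. f x * g x) = \<tau> f * \<tau> g)
    \<and> \<tau> (\<lambda>x. 1) = 1
    \<and> (\<forall>f\<in>H. \<forall>g\<in>H. (\<forall>x\<in>B. f x = g x) \<longrightarrow> \<tau> f = \<tau> g)}"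

definition poly_fiber :: "('a::real_normed_vector \<Rightarrow> 'a) \<Rightarrow> ('a \<Rightarrow> complex) set
      \<Rightarrow> (('a \<Rightarrow> complex) \<Rightarrow> complex) \<Rightarrow> (('a \<Rightarrow> complex) \<Rightarrow> complex) set" where
  "poly_fiber J H z0 = {\<tau> \<in> spectrum_alg H. \<forall>g\<in>Au J. \<tau> g = Au_ext J g z0}"

definition wP_topology :: "('a::real_normed_vector \<Rightarrow> 'a) \<Rightarrow> (('a \<Rightarrow> complex) \<Rightarrow> complex) topology" where
  "wP_topology J = topology_generated_by
      {{z \<in> bidual J. ABpoly J P z \<in> U} | P U. cpoly J P \<and> open U}"

(* nets: a directed preorder on the index type and its section filter *)
definition directed :: "('i \<Rightarrow> 'i \<Rightarrow> bool) \<Rightarrow> bool" where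
  "directed le \<longleftrightarrow> (\<forall>a. le a a) \<and> (\<forall>a b c. le a b \<longrightarrow> le b c \<longrightarrow> le a c)
      \<and> (\<forall>a b. \<exists>c. le a c \<and> le b c)"

definition net_filter :: "('i \<Rightarrow> 'i \<Rightarrow> bool) \<Rightarrow> 'i filter" where
  "net_filter le = (INF a. principal {b. le a b})"

end

theory Submission imports Defs begin

text \<open>Suppose \<open>f (x\<^sub>\<alpha>)\<close> does not tend to \<open>\<lambda>\<close> and pass to the subnet on which \<open>f (x\<^sub>\<alpha>)\<close> stays
  \<open>\<epsilon>\<close>-far from \<open>\<lambda>\<close>. The point evaluations at \<open>x\<^sub>\<alpha>\<close> on \<open>H(B)\<close> lie in a product of closed
  discs, compact by Tychonoff, so they have a cluster point \<open>\<tau>\<close>; the defining identities of a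
  character are closed conditions, so \<open>\<tau>\<close> lies in the spectrum. Convergence in
  \<open>w(X\<^sup>*\<^sup>*, P(X))\<close> means that \<open>P (x\<^sub>\<alpha>)\<close> tends to the Aron--Berner extension of \<open>P\<close> at
  \<open>x\<^sub>0\<^sup>*\<^sup>*\<close> for every polynomial \<open>P\<close>, and by uniform approximation the same holds for every
  \<open>g \<in> A\<^sub>u(B)\<close>. Hence \<open>\<tau>\<close> lies in the fiber over \<open>x\<^sub>0\<^sup>*\<^sup>*\<close>, so \<open>\<tau> f = \<lambda>\<close>, contradicting
  \<open>|\<tau> f - \<lambda>| \<ge> \<epsilon>\<close>.\<close>

lemma ABext_canon:
  assumes "cmultilinear J m A" "j \<le> m"
  shows "ABext m A j xs (\<lambda>_. canon J y) = A (\<lambda>i. if m - j \<le> i \<and> i < m then y else xs i)"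
  using assms(2)
proof (induction j arbitrary: xs)
  case 0
  have "(\<lambda>i. if m \<le> i \<and> i < m then y else xs i) = xs" by (rule ext) (meson leD)
  then show ?case by simp
next
  case (Suc j)
  define k where "k = m - Suc j"
  define ys where "ys = (\<lambda>i. if m - j \<le> i \<and> i < m then y else xs i)"
  have "k < m" using Suc.prems unfolding k_def by simp
  then have linear_k: "(\<lambda>z. A (ys(k := z))) \<in> cdual J"
    using assms(1) unfolding cmultilinear_def by blast
  have "ABext m A j (xs(k := z)) (\<lambda>_. canon J y) = A (ys(k := z))" for z
  proof -
    have "(\<lambda>i. if m - j \<le> i \<and> i < m then y else (xs(k := z)) i) = ys(k := z)"
      using Suc.prems unfolding ys_def k_def by (auto simp: fun_eq_iff)
    with Suc.IH[of "xs(k := z)"] Suc.prems show ?thesis by (metis Suc_leD)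
  qed
  then have "ABext m A (Suc j) xs (\<lambda>_. canon J y) = A (ys(k := y))"
    using linear_k by (simp add: k_def[symmetric] canon_def)
  also have "ys(k := y) = (\<lambda>i. if m - Suc j \<le> i \<and> i < m then y else xs i)"
    using Suc.prems unfolding ys_def k_def by (auto simp: fun_eq_iff)
  finally show ?case .
qed

lemma poly_rep_ABext_canon:
  assumes "poly_rep J P N A"
  shows "(\<Sum>m\<le>N. ABext m (A m) m (\<lambda>_. 0) (\<lambda>_. canon J y)) = P y"
proof -
  have "ABext m (A m) m (\<lambda>_. 0) (\<lambda>_. canon J y) = A m (\<lambda>_. y)" if "m \<le> N" for m
  proof -
    have ml: "cmultilinear J m (A m)" using assms that unfolding poly_rep_def by blast
    then have "A m (\<lambda>i. if m - m \<le> i \<and> i < m then y else 0) = A m (\<lambda>_. y)"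
      unfolding cmultilinear_def by simp
    with ABext_canon[OF ml] show ?thesis by simp
  qed
  then show ?thesis using assms unfolding poly_rep_def by simp
qed

lemma ABpoly_canon:
  assumes "cpoly J P"
  shows "ABpoly J P (canon J y) = P y"
proof -
  obtain N A where "poly_rep J P N A" using assms unfolding cpoly_def by blast
  then have "\<exists>v. \<exists>N A. poly_rep J P N A \<and> v = (\<Sum>m\<le>N. ABext m (A m) m (\<lambda>_. 0) (\<lambda>_. canon J y))"
    by blast
  from someI_ex[OF this] obtain N' A' where "poly_rep J P N' A'"
    and "ABpoly J P (canon J y) = (\<Sum>m\<le>N'. ABext m (A' m) m (\<lambda>_. 0) (\<lambda>_. canon J y))"
    unfolding ABpoly_def by blast
  then show ?thesis by (simp add: poly_rep_ABext_canon)
qed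

lemma eventually_net_filter:
  assumes "directed le"
  shows "eventually P (net_filter le) \<longleftrightarrow> (\<exists>a. \<forall>b. le a b \<longrightarrow> P b)"
proof -
  have "eventually P (net_filter le) \<longleftrightarrow> (\<exists>a\<in>UNIV. eventually P (principal {b. le a b}))"
    unfolding net_filter_def
  proof (rule eventually_INF_base)
    fix a b
    obtain c where "le a c" "le b c" using assms unfolding directed_def by blast
    then show "\<exists>c\<in>UNIV. principal {d. le c d} \<le> inf (principal {d. le a d}) (principal {d. le b d})"
      using assms unfolding directed_def by (intro bexI[of _ c]) auto
  qed auto
  then show ?thesis by (simp add: eventually_principal)
qed

lemma net_filter_nontrivial:
  assumes "directed le"
  shows "net_filter le \<noteq> bot"
  using eventually_net_filter[OF assms, of "\<lambda>_. False"] assms unfolding directed_def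
  by (metis eventually_bot)

lemma tendsto_cpoly_of_limitin_wP:
  assumes "cpoly J P" "z0 \<in> bidual J"
    and "limitin (wP_topology J) (\<lambda>a. canon J (x a)) z0 F"
  shows "((\<lambda>a. P (x a)) \<longlongrightarrow> ABpoly J P z0) F"
proof (rule topological_tendstoI)
  fix U assume U: "open U" "ABpoly J P z0 \<in> U"
  define V where "V = {z \<in> bidual J. ABpoly J P z \<in> U}"
  have "openin (wP_topology J) V"
    unfolding wP_topology_def openin_topology_generated_by_iff V_def
    using assms(1) U(1) by (intro generate_topology_on.Basis) blast
  moreover have "z0 \<in> V" using assms(2) U(2) unfolding V_def by simp
  ultimately have "eventually (\<lambda>a. canon J (x a) \<in> V) F"
    using assms(3) unfolding limitin_def by blast
  then show "eventually (\<lambda>a. P (x a) \<in> U) F"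
    by eventually_elim (simp add: V_def ABpoly_canon[OF assms(1)])
qed

lemma uniform_limit_tendsto_lim:
  fixes P :: "nat \<Rightarrow> 'a \<Rightarrow> 'b::complete_space"
  assumes "uniform_limit S P g sequentially" "\<And>n. (P n \<longlongrightarrow> c n) G"
    and "eventually (\<lambda>y. y \<in> S) G" "G \<noteq> bot"
  shows "(g \<longlongrightarrow> lim c) G"
proof -
  have "Cauchy c"
  proof (rule metric_CauchyI)
    fix e :: real assume "e > 0"
    have "uniformly_Cauchy_on S P"
      using assms(1) by (intro uniformly_convergent_Cauchy) (auto simp: uniformly_convergent_on_def)
    then obtain M where M: "\<forall>y\<in>S. \<forall>m\<ge>M. \<forall>n\<ge>M. dist (P m y) (P n y) < e/2"
      using \<open>e > 0\<close> unfolding uniformly_Cauchy_on_def by (meson half_gt_zero)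
    have "dist (c m) (c n) \<le> e/2" if "m \<ge> M" "n \<ge> M" for m n
    proof (rule tendsto_upperbound)
      show "((\<lambda>y. dist (P m y) (P n y)) \<longlongrightarrow> dist (c m) (c n)) G"
        using assms(2) by (intro tendsto_dist)
      show "eventually (\<lambda>y. dist (P m y) (P n y) \<le> e/2) G"
        using assms(3) by eventually_elim (use M that in \<open>auto intro: less_imp_le\<close>)
    qed (use assms(4) in auto)
    then show "\<exists>M. \<forall>m\<ge>M. \<forall>n\<ge>M. dist (c m) (c n) < e"
      using \<open>e > 0\<close> by (intro exI[of _ M] allI impI) (force intro: le_less_trans[where y = "e/2"])
  qed
  then have "c \<longlonglongrightarrow> lim c" by (simp add: Cauchy_convergent_iff convergent_LIMSEQ_iff)
  show ?thesis
    by (rule swap_uniform_limit'[OF _ \<open>c \<longlonglongrightarrow> lim c\<close> assms(1,3)]) (use assms(2) in auto)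
qed

lemma tendsto_Au_ext:
  assumes "g \<in> Au J" "F \<noteq> bot" "\<forall>a. x a \<in> B"
    and "\<And>P. cpoly J P \<Longrightarrow> ((\<lambda>a. P (x a)) \<longlongrightarrow> ABpoly J P z0) F"
  shows "((\<lambda>a. g (x a)) \<longlongrightarrow> Au_ext J g z0) F"
proof -
  define P where "P = (SOME P. (\<forall>n. cpoly J (P n)) \<and> uniform_limit B P g sequentially)"
  have "\<exists>P. (\<forall>n. cpoly J (P n)) \<and> uniform_limit B P g sequentially"
    using assms(1) unfolding Au_def by blast
  from someI_ex[OF this] have "\<forall>n. cpoly J (P n)" "uniform_limit B P g sequentially"
    unfolding P_def by blast+
  then have "(g \<longlongrightarrow> lim (\<lambda>n. ABpoly J (P n) z0)) (filtermap x F)"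
    using assms(2-4)
    by (intro uniform_limit_tendsto_lim)
      (auto simp: filterlim_filtermap eventually_filtermap filtermap_bot_iff)
  then show ?thesis
    unfolding Au_ext_def P_def[symmetric] filterlim_filtermap .
qed

text \<open>Functionals on \<open>H(B)\<close> are modelled as total functions extended by \<open>0\<close> off \<open>H\<close>, so the
  weak-star topology is the product topology on \<open>('a \<Rightarrow> complex) \<Rightarrow> complex\<close>.\<close>

definition point_eval :: "('a \<Rightarrow> complex) set \<Rightarrow> 'a \<Rightarrow> ('a \<Rightarrow> complex) \<Rightarrow> complex" where
  "point_eval H y = (\<lambda>h. if h \<in> H then h y else 0)"

lemma continuous_on_coordinate [continuous_intros]:
  "continuous_on S (\<lambda>p. (p :: 'b \<Rightarrow> 'c::topological_space) i)"
  by (rule continuous_on_subset[OF continuous_on_product_coordinates]) simp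

lemma cluster_point_mem_closed:
  assumes "inf (nhds t) F \<noteq> bot" "closed C" "eventually (\<lambda>p. p \<in> C) F"
  shows "t \<in> C"
proof (rule ccontr)
  assume "t \<notin> C"
  then have "eventually (\<lambda>p. p \<in> - C) (nhds t)"
    using assms(2) by (intro eventually_nhds_in_open) auto
  with assms(3) have "eventually (\<lambda>p. False) (inf (nhds t) F)"
    unfolding eventually_inf by blast
  with assms(1) show False by (simp add: eventually_False)
qed

lemma cluster_point_eq_limit:
  fixes \<phi> :: "'a::topological_space \<Rightarrow> 'b::metric_space"
  assumes "inf (nhds t) G \<noteq> bot" "continuous_on UNIV \<phi>" "(\<phi> \<longlongrightarrow> l) G"
  shows "\<phi> t = l"
proof -
  have "dist (\<phi> t) l \<le> d" if "d > 0" for d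
  proof -
    have "t \<in> {p. dist (\<phi> p) l \<le> d}"
    proof (rule cluster_point_mem_closed[OF assms(1)])
      show "closed {p. dist (\<phi> p) l \<le> d}"
        using assms(2) by (intro closed_Collect_le continuous_intros) auto
      show "eventually (\<lambda>p. p \<in> {p. dist (\<phi> p) l \<le> d}) G"
        using tendstoD[OF assms(3) that] by eventually_elim simp
    qed
    then show ?thesis by simp
  qed
  then show ?thesis by (metis dense not_le zero_less_dist_iff)
qed

lemma point_evals_have_cluster_point:
  assumes "H \<subseteq> Hinf J" "G \<noteq> bot" "eventually (\<lambda>p. p \<in> point_eval H ` B) G"
  shows "\<exists>\<tau>. inf (nhds \<tau>) G \<noteq> bot"
proof -
  have "\<forall>h\<in>H. \<exists>b. \<forall>y\<in>B. norm (h y) \<le> b"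
    using assms(1) unfolding Hinf_def bounded_iff by blast
  then obtain bd where bd: "\<And>h y. h \<in> H \<Longrightarrow> y \<in> B \<Longrightarrow> norm (h y) \<le> bd h"
    by metis
  define K where "K = PiE UNIV (\<lambda>h. cball (0::complex) (if h \<in> H then bd h else 0))"
  have "compactin (product_topology (\<lambda>_. euclidean) UNIV) K"
    unfolding K_def by (simp add: compactin_PiE)
  then have "compact K" by (simp add: euclidean_product_topology)
  moreover have "point_eval H ` B \<subseteq> K"
    using bd by (auto simp: K_def point_eval_def)
  ultimately show ?thesis
    using assms(2,3) unfolding compact_filter by (metis (mono_tags, lifting) eventually_mono subsetD)
qed

lemma cluster_point_of_point_evals_in_spectrum:
  assumes "uniform_algebra J H" "inf (nhds \<tau>) G \<noteq> bot"
    and "eventually (\<lambda>p. p \<in> point_eval H ` B) G"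
  shows "\<tau> \<in> spectrum_alg H"
proof -
  have closed_eq: "\<tau> \<in> {p. l p = r p}"
    if "continuous_on UNIV l" "continuous_on UNIV r" "\<And>y. y \<in> B \<Longrightarrow> l (point_eval H y) = r (point_eval H y)"
    for l r :: "(('a \<Rightarrow> complex) \<Rightarrow> complex) \<Rightarrow> complex"
    using assms(3) that
    by (intro cluster_point_mem_closed[OF assms(2) closed_Collect_eq]) (auto elim!: eventually_mono)
  have H: "\<forall>f\<in>H. \<forall>g\<in>H. (\<lambda>x. f x + g x) \<in> H \<and> (\<lambda>x. f x * g x) \<in> H"
    "\<forall>c. \<forall>f\<in>H. (\<lambda>x. c * f x) \<in> H" "(\<lambda>x. 1) \<in> H"
    using assms(1) unfolding uniform_algebra_def by blast+
  show ?thesis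
    unfolding spectrum_alg_def
  proof (intro CollectI conjI ballI allI impI)
    fix g h assume gh: "g \<in> H" "h \<in> H"
    show "\<tau> (\<lambda>x. g x + h x) = \<tau> g + \<tau> h"
      by (rule closed_eq[of "\<lambda>p. p (\<lambda>x. g x + h x)" "\<lambda>p. p g + p h", simplified])
        (use gh H(1) in \<open>auto simp: point_eval_def intro!: continuous_intros\<close>)
    show "\<tau> (\<lambda>x. g x * h x) = \<tau> g * \<tau> h"
      by (rule closed_eq[of "\<lambda>p. p (\<lambda>x. g x * h x)" "\<lambda>p. p g * p h", simplified])
        (use gh H(1) in \<open>auto simp: point_eval_def intro!: continuous_intros\<close>)
  next
    fix c g assume "g \<in> H"
    show "\<tau> (\<lambda>x. c * g x) = c * \<tau> g"
      by (rule closed_eq[of "\<lambda>p. p (\<lambda>x. c * g x)" "\<lambda>p. c * p g", simplified])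
        (use \<open>g \<in> H\<close> H(2) in \<open>auto simp: point_eval_def intro!: continuous_intros\<close>)
  next
    show "\<tau> (\<lambda>x. 1) = 1"
      by (rule closed_eq[of "\<lambda>p. p (\<lambda>x. 1)" "\<lambda>p. 1", simplified])
        (use H(3) in \<open>auto simp: point_eval_def\<close>)
  next
    fix g h assume gh: "g \<in> H" "h \<in> H" and "\<forall>x\<in>B. g x = h x"
    show "\<tau> g = \<tau> h"
      by (rule closed_eq[of "\<lambda>p. p g" "\<lambda>p. p h", simplified])
        (use gh \<open>\<forall>x\<in>B. g x = h x\<close> in \<open>auto simp: point_eval_def\<close>)
  qed
qed

lemma poly_fiber_cluster_point:
  assumes "uniform_algebra J H" "F \<noteq> bot" "\<forall>a. x a \<in> B"
    and "\<And>g. g \<in> Au J \<Longrightarrow> ((\<lambda>a. g (x a)) \<longlongrightarrow> Au_ext J g z0) F"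
  obtains \<tau> where "\<tau> \<in> poly_fiber J H z0"
    and "inf (nhds \<tau>) (filtermap (\<lambda>a. point_eval H (x a)) F) \<noteq> bot"
proof -
  define G where "G = filtermap (\<lambda>a. point_eval H (x a)) F"
  have "eventually (\<lambda>p. p \<in> point_eval H ` B) G"
    using assms(3) by (simp add: G_def eventually_filtermap)
  moreover have "H \<subseteq> Hinf J" using assms(1) unfolding uniform_algebra_def by blast
  ultimately obtain \<tau> where cl: "inf (nhds \<tau>) G \<noteq> bot"
    using point_evals_have_cluster_point assms(2) by (metis G_def filtermap_bot_iff)
  have "\<tau> g = Au_ext J g z0" if "g \<in> Au J" for g
  proof (rule cluster_point_eq_limit[OF cl, of "\<lambda>p. p g"])
    have "g \<in> H" using that assms(1) unfolding uniform_algebra_def by blast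
    then show "((\<lambda>p. p g) \<longlongrightarrow> Au_ext J g z0) G"
      using assms(4)[OF that] by (simp add: G_def filterlim_filtermap point_eval_def)
  qed (rule continuous_on_coordinate)
  then have "\<tau> \<in> poly_fiber J H z0"
    using cluster_point_of_point_evals_in_spectrum[OF assms(1) cl] \<open>eventually _ G\<close>
    unfolding poly_fiber_def by blast
  with cl show thesis unfolding G_def using that by blast
qed

theorem mainTheorem2:
  fixes J :: "'a::banach \<Rightarrow> 'a"
    and H :: "('a \<Rightarrow> complex) set"
    and z0 :: "('a \<Rightarrow> complex) \<Rightarrow> complex"
    and f :: "'a \<Rightarrow> complex"
    and lam :: complex
    and le :: "'i \<Rightarrow> 'i \<Rightarrow> bool"
    and x :: "'i \<Rightarrow> 'a"
  assumes "complex_structure J"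
    and "uniform_algebra J H"
    and "z0 \<in> bidual_ball J"
    and "f \<in> H"
    and "(\<lambda>\<tau>. \<tau> f) ` poly_fiber J H z0 = {lam}"
    and "directed le"
    and "\<forall>a. x a \<in> B"
    and "limitin (wP_topology J) (\<lambda>a. canon J (x a)) z0 (net_filter le)"
  shows "((\<lambda>a. f (x a)) \<longlongrightarrow> lam) (net_filter le)"
proof (rule ccontr)
  assume "\<not> ?thesis"
  then obtain e where "e > 0" and not_close: "\<not> eventually (\<lambda>a. dist (f (x a)) lam < e) (net_filter le)"
    unfolding tendsto_iff by auto
  define F where "F = inf (net_filter le) (principal {a. e \<le> dist (f (x a)) lam})"
  have "F \<noteq> bot"
    using not_close by (auto simp: F_def eventually_inf_principal not_le trivial_limit_def)
  have "z0 \<in> bidual J" using assms(3) unfolding bidual_ball_def by blast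
  with assms(8) have "((\<lambda>a. P (x a)) \<longlongrightarrow> ABpoly J P z0) (net_filter le)" if "cpoly J P" for P
    using that by (intro tendsto_cpoly_of_limitin_wP)
  then have "((\<lambda>a. g (x a)) \<longlongrightarrow> Au_ext J g z0) F" if "g \<in> Au J" for g
    unfolding F_def
    by (rule tendsto_mono[OF inf_le1 tendsto_Au_ext[OF that net_filter_nontrivial[OF assms(6)] assms(7)]])
  then obtain \<tau> where "\<tau> \<in> poly_fiber J H z0"
    and cl: "inf (nhds \<tau>) (filtermap (\<lambda>a. point_eval H (x a)) F) \<noteq> bot"
    using poly_fiber_cluster_point[OF assms(2) \<open>F \<noteq> bot\<close> assms(7)] by blast
  then have "\<tau> f = lam" using assms(5) by blast
  moreover have "\<tau> \<in> {p. e \<le> dist (p f) lam}"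
    using assms(4)
    by (intro cluster_point_mem_closed[OF cl] closed_Collect_le continuous_intros)
      (simp_all add: F_def eventually_filtermap eventually_inf_principal point_eval_def)
  ultimately show False using \<open>e > 0\<close> by simp
qed

end
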